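(* Let Assumptions (A1) and (A2) from the context hold and let $\gamma>0$. Consider the estimator $$\dot{\mathbf z}(t)=-\gamma\,\mathbf z(t)+\mathbf u(t),\qquad \mathbf z(t_0)=\mathbf z_0,\qquad \mathbf x(t)=\mathbf z(t)+\boldsymbol\phi(t),$$ with input $$\mathbf u(t)=-(B\otimes I_r)\,K(t)\,\mathrm{sgn}\{(B^T\otimes I_r)\mathbf x(t)\},$$ where $K(t)\in\mathbb R^{r\ell\times r\ell}$ is diagonal with diagonal entries $\kappa_j(t)$, $j\in\{1,\dots,r\ell\}$, updated by $$\dot\kappa_j(t)=|y_j(t)|,\qquad \kappa_j(t_0)\ge 1,$$ and $\mathbf y(t)=(y_1(t),\dots,y_{r\ell}(t))^T=(B^T\otimes I_r)\mathbf x(t)$. Solutions of the resulting discontinuous system are understood in the Filippov sense. Then for every initial condition $\mathbf z_0\in\mathbb R^{nr}$ the average consensus error $\tilde{\mathbf x}(t)=\mathbf x(t)-\mathbf 1_n\otimes\bar\phi(t)$ satisfies $\lim_{t\to\infty}\tilde{\mathbf x}(t)=0$.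
   Context: There are $n$ agents $v_1,\dots,v_n$ communicating over an undirected graph $\mathcal G(\mathcal V,\mathcal E)$. Each undirected edge is regarded as two distinct directed edges, so the edge set is $\mathcal E=\{e_1,\dots,e_\ell\}\subseteq\mathcal V\times\mathcal V$. The incidence matrix $B=[b_{ij}]\in\{-1,0,1\}^{n\times\ell}$ has $b_{ij}=-1$ if edge $e_j$ leaves $v_i$, $b_{ij}=1$ if $e_j$ enters $v_i$, and $0$ otherwise (so $\mathbf 1_n^TB=0$ and the Laplacian is $L=\tfrac12BB^T$). $I_r$ is the $r\times r$ identity, $\mathbf 1_n$ the all-ones vector, $\otimes$ the Kronecker product, $(\cdot)^+$ the Moore–Penrose generalized inverse, and $M=I_n-\frac1n\mathbf 1_n\mathbf 1_n^T$. For vectors, $\mathrm{sgn}\{\cdot\}$ and $|\cdot|$ act componentwise, with $\mathrm{sgn}(0)=0$. Each agent $v_i$ has a continuously differentiable reference signal $\phi_i(t)\in\mathbb R^r$; $\boldsymbol\phi(t)=(\phi_1(t)^T,\dots,\phi_n(t)^T)^T\in\mathbb R^{nr}$ and $\bar\phi(t)=\frac1n\sum_{i=1}^n\phi_i(t)=\frac1n(\mathbf 1_n^T\otimes I_r)\boldsymbol\phi(t)$. The vector $\mathbf x(t)=(x_1(t)^T,\dots,x_n(t)^T)^T$ collects the agents' estimates of $\bar\phi(t)$. (A1) The graph $\mathcal G$ is connected and undirected. (A2) There exist constants $\varphi,\dot\varphi<\infty$ such that $\sup_{t\ge 0}\|(B^T\otimes I_r)\boldsymbol\phi(t)\|_\infty\le\varphi$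 and $\sup_{t\ge0}\|(B^T\otimes I_r)\dot{\boldsymbol\phi}(t)\|_\infty\le\dot\varphi$. Equivalently, $\|\phi_i(t)-\phi_j(t)\|_\infty\le\varphi$ and $\|\dot\phi_i(t)-\dot\phi_j(t)\|_\infty\le\dot\varphi$ for all $t$ and all $(v_i,v_j)\in\mathcal E$. *)

theory Defs
  imports "HOL-Analysis.Analysis"
begin

text \<open>Graph: agents are the elements of a finite type 'n, directed edges are the
elements of a finite type 'e; edge e leaves agent (etl e) and enters agent (ehd e).\<close>

definition undirected_connected :: "('e::finite \<Rightarrow> 'n::finite) \<Rightarrow> ('e \<Rightarrow> 'n) \<Rightarrow> bool" where
  "undirected_connected etl ehd \<longleftrightarrow>
     inj (\<lambda>e. (etl e, ehd e)) \<and>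
     (\<forall>e. etl e \<noteq> ehd e) \<and>
     (\<forall>e. \<exists>e'. etl e' = ehd e \<and> ehd e' = etl e) \<and>
     (\<forall>i j. (i, j) \<in> (range (\<lambda>e. (etl e, ehd e)))\<^sup>*)"

definition incidence :: "('e::finite \<Rightarrow> 'n::finite) \<Rightarrow> ('e \<Rightarrow> 'n) \<Rightarrow> real^'e^'n" where
  "incidence etl ehd = (\<chi> i e. if ehd e = i then 1 else if etl e = i then -1 else 0)"

definition kron :: "real^'b::finite^'a::finite \<Rightarrow> real^'d::finite^'c::finite \<Rightarrow> real^('b \<times> 'd)^('a \<times> 'c)" where
  "kron A C = (\<chi> p q. A $ fst p $ fst q * C $ snd p $ snd q)"

definition vkron :: "real^'a::finite \<Rightarrow> real^'c::finite \<Rightarrow> real^('a \<times> 'c)" where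
  "vkron a c = (\<chi> p. a $ fst p * c $ snd p)"

definition ones :: "real^'a::finite" where "ones = (\<chi> i. 1)"

definition diagm :: "real^'a::finite \<Rightarrow> real^'a^'a" where
  "diagm v = (\<chi> i j. if i = j then v $ i else 0)"

definition vsgn :: "real^'a::finite \<Rightarrow> real^'a" where "vsgn v = (\<chi> i. sgn (v $ i))"
definition vabs :: "real^'a::finite \<Rightarrow> real^'a" where "vabs v = (\<chi> i. \<bar>v $ i\<bar>)"

definition phibar :: "real^('n::finite \<times> 'r::finite) \<Rightarrow> real^'r" where
  "phibar ph = (\<chi> k. (1 / real CARD('n)) * (\<Sum>i\<in>UNIV. ph $ (i, k)))"

definition estimator_field ::
  "('e::finite \<Rightarrow> 'n::finite) \<Rightarrow> ('e \<Rightarrow> 'n) \<Rightarrow> real \<Rightarrow> (real \<Rightarrow> real^('n \<times> 'r::finite))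
   \<Rightarrow> real \<Rightarrow> (real^('n \<times> 'r)) \<times> (real^('e \<times> 'r)) \<Rightarrow> (real^('n \<times> 'r)) \<times> (real^('e \<times> 'r))" where
  "estimator_field etl ehd \<gamma> phi t s =
     (let z = fst s; \<kappa> = snd s;
          B = incidence etl ehd;
          x = z + phi t;
          y = kron (transpose B) (mat 1) *v x;
          u = - (kron B (mat 1) *v (diagm \<kappa> *v vsgn y))
      in (- \<gamma> *\<^sub>R z + u, vabs y))"

definition filippov_set :: "(real \<Rightarrow> 'a::euclidean_space \<Rightarrow> 'a) \<Rightarrow> real \<Rightarrow> 'a \<Rightarrow> 'a set" where
  "filippov_set f t x =
     (\<Inter>\<delta>\<in>{0<..}. \<Inter>N\<in>null_sets lebesgue. closure (convex hull (f t ` (ball x \<delta> - N))))"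

text \<open>Filippov solution on [t0, oo): locally absolutely continuous (i.e. the integral of
a locally Lebesgue integrable derivative) with derivative a.e. in the Filippov set.\<close>
definition filippov_solution :: "(real \<Rightarrow> 'a::euclidean_space \<Rightarrow> 'a) \<Rightarrow> real \<Rightarrow> (real \<Rightarrow> 'a) \<Rightarrow> bool" where
  "filippov_solution f t0 w \<longleftrightarrow>
     (\<exists>v. (\<forall>T\<ge>t0. v absolutely_integrable_on {t0..T}) \<and>
          (\<forall>t\<ge>t0. w t = w t0 + integral {t0..t} v) \<and>
          (AE t in lebesgue. t \<ge> t0 \<longrightarrow> v t \<in> filippov_set f t (w t)))"

end

theory Submission
  imports Defs
begin

(*
  Lyapunov argument.  Let x~ = x - 1 (x) bar phi be the consensus error and let K be a large
  constant.  Along every Filippov solution the function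

    V = |x~|^2 / 2 + sum_j (kappa_j - K)^2 / 2

  satisfies V' <= - gamma |x~|^2 almost everywhere.  Indeed y = (B^T (x) I) x~, so testing the
  switching input against x~ gives - sum_j kappa_j |y_j|, which the adaptation law turns into
  - K sum_j |y_j|; by connectivity and (A2) this dominates the forcing term coming from phi.
  Hence V decreases, the nondecreasing gains kappa_j are bounded and converge, so |x~|^2
  converges; since its integral over [t0, oo) is finite, the limit is 0.
*)

section \<open>Integrals and limits of real functions\<close>

lemma increment_le_of_local_increment_le:
  fixes g h :: "real \<Rightarrow> real"
  assumes "a \<le> b" and "\<delta> > 0"
    and local: "\<And>c d. a \<le> c \<Longrightarrow> c \<le> d \<Longrightarrow> d \<le> b \<Longrightarrow> d - c < \<delta> \<Longrightarrow> \<bar>g d - g c\<bar> \<le> h d - h c"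
  shows "\<bar>g b - g a\<bar> \<le> h b - h a"
proof -
  have "\<forall>c d. a \<le> c \<longrightarrow> c \<le> d \<longrightarrow> d \<le> b \<longrightarrow> d - c < real n * (\<delta> / 2) \<longrightarrow> \<bar>g d - g c\<bar> \<le> h d - h c"
    for n
  proof (induction n)
    case 0
    then show ?case by auto
  next
    case (Suc n)
    show ?case
    proof (intro allI impI)
      fix c d assume cd: "a \<le> c" "c \<le> d" "d \<le> b" "d - c < real (Suc n) * (\<delta> / 2)"
      show "\<bar>g d - g c\<bar> \<le> h d - h c"
      proof (cases "d - c < \<delta>")
        case True
        then show ?thesis using local cd by blast
      next
        case False
        define m where "m = c + \<delta> / 2"
        have "\<bar>g d - g m\<bar> \<le> h d - h m"
          using Suc.IH cd False \<open>\<delta> > 0\<close> by (simp add: m_def algebra_simps)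
        moreover have "\<bar>g m - g c\<bar> \<le> h m - h c"
          using local[of c m] cd False \<open>\<delta> > 0\<close> by (simp add: m_def)
        ultimately show ?thesis by linarith
      qed
    qed
  qed
  moreover obtain n where "b - a < real n * (\<delta> / 2)"
    using ex_less_of_nat_mult[of "\<delta> / 2" "b - a"] \<open>\<delta> > 0\<close> by auto
  ultimately show ?thesis using \<open>a \<le> b\<close> by blast
qed

lemma integral_Icc_diff:
  fixes f :: "real \<Rightarrow> 'a::banach"
  assumes "f integrable_on {a..d}" and "a \<le> c" and "c \<le> d"
  shows "integral {a..d} f - integral {a..c} f = integral {c..d} f"
  using Henstock_Kurzweil_Integration.integral_combine[OF assms(2,3,1)] by (simp add: algebra_simps)

lemma square_increment_estimate:
  fixes F f :: "real \<Rightarrow> real"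
  assumes f: "f absolutely_integrable_on {c..d}"
    and Ff: "(\<lambda>s. F s * f s) integrable_on {c..d}"
    and Fd: "F d = F c + integral {c..d} f"
    and close: "\<And>s. s \<in> {c..d} \<Longrightarrow> \<bar>F d + F c - 2 * F s\<bar> \<le> e"
  shows "\<bar>(F d)\<^sup>2 - (F c)\<^sup>2 - 2 * integral {c..d} (\<lambda>s. F s * f s)\<bar>
          \<le> e * integral {c..d} (\<lambda>s. \<bar>f s\<bar>)"
proof -
  have fi: "f integrable_on {c..d}" and fa: "(\<lambda>s. \<bar>f s\<bar>) integrable_on {c..d}"
    using f by (simp_all add: absolutely_integrable_on_def)
  have lhs: "(\<lambda>s. (F d + F c - 2 * F s) * f s) integrable_on {c..d}"
    using integrable_diff[OF integrable_on_mult_right[OF fi, of "F d + F c"]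
        integrable_on_mult_right[OF Ff, of 2]]
    by (simp add: algebra_simps)
  have "(F d)\<^sup>2 - (F c)\<^sup>2 - 2 * integral {c..d} (\<lambda>s. F s * f s)
      = (F d + F c) * integral {c..d} f - 2 * integral {c..d} (\<lambda>s. F s * f s)"
    using Fd by (simp add: power2_eq_square algebra_simps)
  also have "\<dots> = integral {c..d} (\<lambda>s. (F d + F c) * f s - 2 * (F s * f s))"
    by (simp add: integral_diff[OF integrable_on_mult_right[OF fi] integrable_on_mult_right[OF Ff]])
  also have "\<dots> = integral {c..d} (\<lambda>s. (F d + F c - 2 * F s) * f s)"
    by (rule integral_cong) (simp add: algebra_simps)
  also have "\<bar>\<dots>\<bar> \<le> integral {c..d} (\<lambda>s. e * \<bar>f s\<bar>)"
    using integral_norm_bound_integral[OF lhs integrable_on_mult_right[OF fa]] close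
    by (simp add: abs_mult mult_right_mono)
  finally show ?thesis by simp
qed

lemma continuous_on_indefinite_integral:
  fixes F f :: "real \<Rightarrow> 'a::banach"
  assumes "f integrable_on {a..b}" and F: "\<And>t. t \<in> {a..b} \<Longrightarrow> F t = F a + integral {a..t} f"
  shows "continuous_on {a..b} F"
proof (rule continuous_on_eq)
  show "continuous_on {a..b} (\<lambda>t. F a + integral {a..t} f)"
    by (intro continuous_on_add continuous_on_const indefinite_integral_continuous_1 assms(1))
qed (metis F)

(* On short intervals F varies by less than e by uniform continuity, so square_increment_estimate
   applies there; the local bounds add up along a partition of [a, b]. *)
lemma indefinite_integral_square_approx:
  fixes F f :: "real \<Rightarrow> real"
  assumes "a \<le> b" and f: "f absolutely_integrable_on {a..b}"
    and F: "\<And>t. t \<in> {a..b} \<Longrightarrow> F t = F a + integral {a..t} f"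
    and Ff: "(\<lambda>t. F t * f t) integrable_on {a..b}" and "e > 0"
  shows "\<bar>(F b)\<^sup>2 - (F a)\<^sup>2 - 2 * integral {a..b} (\<lambda>t. F t * f t)\<bar> \<le> 2 * e * integral {a..b} (\<lambda>s. \<bar>f s\<bar>)"
proof -
  have fi: "f integrable_on {a..b}" and fa: "(\<lambda>s. \<bar>f s\<bar>) integrable_on {a..b}"
    using f by (simp_all add: absolutely_integrable_on_def)
  obtain \<delta> where "\<delta> > 0"
    and \<delta>: "\<And>x x'. x \<in> {a..b} \<Longrightarrow> x' \<in> {a..b} \<Longrightarrow> dist x' x < \<delta> \<Longrightarrow> dist (F x') (F x) < e"
    using compact_uniformly_continuous[OF continuous_on_indefinite_integral[OF fi F] compact_Icc] \<open>e > 0\<close>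
    unfolding uniformly_continuous_on_def by metis
  define g where "g t = (F t)\<^sup>2 - 2 * integral {a..t} (\<lambda>s. F s * f s)" for t
  define h where "h t = 2 * e * integral {a..t} (\<lambda>s. \<bar>f s\<bar>)" for t
  have "\<bar>g b - g a\<bar> \<le> h b - h a"
  proof (rule increment_le_of_local_increment_le[OF \<open>a \<le> b\<close> \<open>\<delta> > 0\<close>])
    fix c d assume cd: "a \<le> c" "c \<le> d" "d \<le> b" "d - c < \<delta>"
    have sub: "{c..d} \<subseteq> {a..b}" "{a..d} \<subseteq> {a..b}" using cd by auto
    have "F c = F a + integral {a..c} f" "F d = F a + integral {a..d} f"
      using F[of c] F[of d] cd by auto
    then have "F d = F c + integral {c..d} f"
      using integral_Icc_diff[OF integrable_on_subinterval[OF fi sub(2)] cd(1,2)] by simp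
    then have "\<bar>(F d)\<^sup>2 - (F c)\<^sup>2 - 2 * integral {c..d} (\<lambda>s. F s * f s)\<bar>
        \<le> 2 * e * integral {c..d} (\<lambda>s. \<bar>f s\<bar>)"
    proof (rule square_increment_estimate[OF absolutely_integrable_on_subinterval[OF f sub(1)]
          integrable_on_subinterval[OF Ff sub(1)]])
      fix s assume "s \<in> {c..d}"
      then have "\<bar>F d - F s\<bar> < e" "\<bar>F c - F s\<bar> < e"
        using \<delta>[of s d] \<delta>[of s c] sub cd by (auto simp: dist_real_def)
      then show "\<bar>F d + F c - 2 * F s\<bar> \<le> 2 * e" by linarith
    qed
    moreover have "integral {a..d} (\<lambda>s. F s * f s) - integral {a..c} (\<lambda>s. F s * f s)
        = integral {c..d} (\<lambda>s. F s * f s)"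
      by (rule integral_Icc_diff[OF integrable_on_subinterval[OF Ff sub(2)] cd(1,2)])
    moreover have "integral {a..d} (\<lambda>s. \<bar>f s\<bar>) - integral {a..c} (\<lambda>s. \<bar>f s\<bar>)
        = integral {c..d} (\<lambda>s. \<bar>f s\<bar>)"
      by (rule integral_Icc_diff[OF integrable_on_subinterval[OF fa sub(2)] cd(1,2)])
    ultimately show "\<bar>g d - g c\<bar> \<le> h d - h c"
      unfolding g_def h_def by (simp add: algebra_simps)
  qed
  then show ?thesis by (simp add: g_def h_def)
qed

lemma indefinite_integral_square:
  fixes F f :: "real \<Rightarrow> real"
  assumes "a \<le> b" and f: "f absolutely_integrable_on {a..b}"
    and F: "\<And>t. t \<in> {a..b} \<Longrightarrow> F t = F a + integral {a..t} f"
  shows "(\<lambda>t. F t * f t) absolutely_integrable_on {a..b}"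
    and "(F b)\<^sup>2 - (F a)\<^sup>2 = 2 * integral {a..b} (\<lambda>t. F t * f t)"
proof -
  have cF: "continuous_on {a..b} F"
    using continuous_on_indefinite_integral F f by (auto simp: absolutely_integrable_on_def)
  show Ff: "(\<lambda>t. F t * f t) absolutely_integrable_on {a..b}"
  proof (rule absolutely_integrable_bounded_measurable_product_real[OF _ _ _ f])
    show "F \<in> borel_measurable (lebesgue_on {a..b})"
      by (rule continuous_imp_measurable_on_sets_lebesgue[OF cF]) simp
    show "bounded (F ` {a..b})"
      by (rule compact_imp_bounded[OF compact_continuous_image[OF cF compact_Icc]])
  qed simp
  define D where "D = (F b)\<^sup>2 - (F a)\<^sup>2 - 2 * integral {a..b} (\<lambda>t. F t * f t)"
  define I where "I = integral {a..b} (\<lambda>s. \<bar>f s\<bar>)"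
  have "I \<ge> 0"
    using f unfolding I_def absolutely_integrable_on_def by (intro integral_nonneg) auto
  have Ffi: "(\<lambda>t. F t * f t) integrable_on {a..b}"
    using Ff by (simp add: absolutely_integrable_on_def)
  have "\<bar>D\<bar> \<le> \<epsilon>" if "\<epsilon> > 0" for \<epsilon>
  proof -
    have "\<epsilon> / (2 * (I + 1)) > 0" using \<open>I \<ge> 0\<close> that by simp
    then have "\<bar>D\<bar> \<le> 2 * (\<epsilon> / (2 * (I + 1))) * I"
      using indefinite_integral_square_approx[OF assms Ffi] unfolding D_def I_def by blast
    also have "\<dots> \<le> \<epsilon>" using \<open>I \<ge> 0\<close> that by (simp add: field_simps)
    finally show ?thesis .
  qed
  then have "D = 0" using field_le_epsilon[of "\<bar>D\<bar>" 0] by simp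
  then show "(F b)\<^sup>2 - (F a)\<^sup>2 = 2 * integral {a..b} (\<lambda>t. F t * f t)" by (simp add: D_def)
qed

lemma bounded_mono_tendsto_at_top:
  fixes g :: "real \<Rightarrow> real"
  assumes mono: "\<And>a b. t0 \<le> a \<Longrightarrow> a \<le> b \<Longrightarrow> g a \<le> g b" and bnd: "\<And>t. t0 \<le> t \<Longrightarrow> g t \<le> M"
  shows "\<exists>L. (g \<longlongrightarrow> L) at_top"
proof -
  define L where "L = Sup (g ` {t0..})"
  have bdd: "bdd_above (g ` {t0..})" using bnd by (auto intro!: bdd_aboveI)
  have "(g \<longlongrightarrow> L) at_top"
  proof (rule order_tendstoI)
    fix a assume "a < L"
    then obtain t where "t \<ge> t0" "a < g t"
      unfolding L_def using less_cSup_iff[OF _ bdd] by auto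
    then show "eventually (\<lambda>x. a < g x) at_top"
      unfolding eventually_at_top_linorder using mono by (meson order_less_le_trans)
  next
    fix a assume "L < a"
    have "g t \<le> L" if "t0 \<le> t" for t
      unfolding L_def by (rule cSup_upper) (use that bdd in auto)
    then show "eventually (\<lambda>x. g x < a) at_top"
      unfolding eventually_at_top_linorder using \<open>L < a\<close> by (meson order_le_less_trans)
  qed
  then show ?thesis by blast
qed

lemma limit_zero_of_bounded_integrals:
  fixes P :: "real \<Rightarrow> real"
  assumes lim: "(P \<longlongrightarrow> L) at_top"
    and nonneg: "\<And>t. t0 \<le> t \<Longrightarrow> 0 \<le> P t"
    and integrable: "\<And>a b. t0 \<le> a \<Longrightarrow> P integrable_on {a..b}"
    and bounded: "\<And>a b. t0 \<le> a \<Longrightarrow> a \<le> b \<Longrightarrow> integral {a..b} P \<le> M"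
  shows "L = 0"
proof (rule ccontr)
  assume "L \<noteq> 0"
  moreover have "L \<ge> 0"
    using lim by (rule tendsto_lowerbound) (auto intro: nonneg eventually_ge_at_top eventually_mono)
  ultimately have "L > 0" by simp
  then obtain T where T: "\<And>t. t \<ge> T \<Longrightarrow> L / 2 < P t"
    using order_tendstoD(1)[OF lim, of "L / 2"] unfolding eventually_at_top_linorder by auto
  define a where "a = max T t0"
  define b where "b = a + 2 * (\<bar>M\<bar> + 1) / L"
  have "a \<le> b" using \<open>L > 0\<close> by (simp add: b_def)
  have "\<bar>M\<bar> + 1 = (b - a) * (L / 2)" using \<open>L > 0\<close> by (simp add: b_def)
  also have "\<dots> = integral {a..b} (\<lambda>_. L / 2)" using \<open>a \<le> b\<close> by simp
  also have "\<dots> \<le> integral {a..b} P"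
  proof (rule integral_le[OF integrable_const_ivl integrable])
    fix x assume "x \<in> {a..b}"
    then show "L / 2 \<le> P x" using T[of x] by (simp add: a_def)
  qed (simp add: a_def)
  also have "\<dots> \<le> M" by (rule bounded[OF _ \<open>a \<le> b\<close>]) (simp add: a_def)
  finally show False by linarith
qed

section \<open>Indefinite integrals\<close>

(* Local absolute continuity on [t0, oo), with f a derivative almost everywhere. *)
definition indefinite_integral_from :: "real \<Rightarrow> (real \<Rightarrow> 'a::euclidean_space) \<Rightarrow> (real \<Rightarrow> 'a) \<Rightarrow> bool" where
  "indefinite_integral_from t0 f F \<longleftrightarrow>
     (\<forall>T\<ge>t0. f absolutely_integrable_on {t0..T}) \<and> (\<forall>t\<ge>t0. F t = F t0 + integral {t0..t} f)"

lemma indefinite_integral_from_absolutely_integrable_on: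
  assumes "indefinite_integral_from t0 f F" and "t0 \<le> a"
  shows "f absolutely_integrable_on {a..b}"
proof (rule absolutely_integrable_on_subinterval)
  show "f absolutely_integrable_on {t0..max a b}"
    using assms unfolding indefinite_integral_from_def by simp
qed (use assms in auto)

lemma indefinite_integral_from_integrable_on:
  assumes "indefinite_integral_from t0 f F" and "t0 \<le> a"
  shows "f integrable_on {a..b}"
  using indefinite_integral_from_absolutely_integrable_on[OF assms]
  by (simp add: absolutely_integrable_on_def)

lemma indefinite_integral_from_increment:
  assumes F: "indefinite_integral_from t0 f F" and "t0 \<le> a" and "a \<le> b"
  shows "F b - F a = integral {a..b} f"
proof -
  have "\<forall>t\<ge>t0. F t = F t0 + integral {t0..t} f"
    using F unfolding indefinite_integral_from_def by blast
  then have "F a = F t0 + integral {t0..a} f" "F b = F t0 + integral {t0..b} f"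
    using assms(2,3) order_trans by blast+
  then show ?thesis
    using integral_Icc_diff[OF indefinite_integral_from_integrable_on[OF F order_refl] assms(2,3)]
    by (simp add: algebra_simps)
qed

lemma indefinite_integral_from_continuous_on:
  assumes F: "indefinite_integral_from t0 f F" and "t0 \<le> a"
  shows "continuous_on {a..b} F"
proof (rule continuous_on_indefinite_integral)
  show "f integrable_on {a..b}" by (rule indefinite_integral_from_integrable_on[OF assms])
  fix t assume "t \<in> {a..b}"
  then show "F t = F a + integral {a..t} f"
    using indefinite_integral_from_increment[OF assms, of t] by (simp add: algebra_simps)
qed

lemma indefinite_integral_from_const: "indefinite_integral_from t0 (\<lambda>_. 0) (\<lambda>_. c)"
  by (simp add: indefinite_integral_from_def)

lemma indefinite_integral_from_add:
  assumes F: "indefinite_integral_from t0 f F" and G: "indefinite_integral_from t0 g G"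
  shows "indefinite_integral_from t0 (\<lambda>t. f t + g t) (\<lambda>t. F t + G t)"
  unfolding indefinite_integral_from_def
proof safe
  fix T assume "t0 \<le> T"
  then show "(\<lambda>t. f t + g t) absolutely_integrable_on {t0..T}"
    using assms unfolding indefinite_integral_from_def by (intro set_integral_add(1)) auto
next
  fix t assume "t0 \<le> t"
  then show "F t + G t = F t0 + G t0 + integral {t0..t} (\<lambda>t. f t + g t)"
    using indefinite_integral_from_increment[OF F order_refl \<open>t0 \<le> t\<close>]
      indefinite_integral_from_increment[OF G order_refl \<open>t0 \<le> t\<close>]
      integral_add[OF indefinite_integral_from_integrable_on[OF F order_refl]
        indefinite_integral_from_integrable_on[OF G order_refl]]
    by (simp add: algebra_simps)
qed

lemma indefinite_integral_from_sum:
  assumes "finite I" and "\<And>i. i \<in> I \<Longrightarrow> indefinite_integral_from t0 (f i) (F i)"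
  shows "indefinite_integral_from t0 (\<lambda>t. \<Sum>i\<in>I. f i t) (\<lambda>t. \<Sum>i\<in>I. F i t)"
  using assms
  by (induction I rule: finite_induct)
    (simp_all add: indefinite_integral_from_const indefinite_integral_from_add)

lemma indefinite_integral_from_diff_const:
  "indefinite_integral_from t0 f F \<Longrightarrow> indefinite_integral_from t0 f (\<lambda>t. F t - c)"
  using indefinite_integral_from_add[OF _ indefinite_integral_from_const, of t0 f F "- c"] by simp

lemma indefinite_integral_from_linear:
  assumes F: "indefinite_integral_from t0 f F" and L: "bounded_linear L"
  shows "indefinite_integral_from t0 (\<lambda>t. L (f t)) (\<lambda>t. L (F t))"
  unfolding indefinite_integral_from_def
proof safe
  fix T assume "t0 \<le> T"
  then show "(\<lambda>t. L (f t)) absolutely_integrable_on {t0..T}"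
    using absolutely_integrable_linear[OF _ L] F unfolding indefinite_integral_from_def o_def by blast
next
  fix t assume "t0 \<le> t"
  have "L (F t) - L (F t0) = integral {t0..t} (\<lambda>t. L (f t))"
    using indefinite_integral_from_increment[OF F order_refl \<open>t0 \<le> t\<close>]
      integral_linear[OF indefinite_integral_from_integrable_on[OF F order_refl] L]
    by (simp add: o_def linear_diff[OF bounded_linear.linear[OF L], symmetric])
  then show "L (F t) = L (F t0) + integral {t0..t} (\<lambda>t. L (f t))" by (simp add: algebra_simps)
qed

lemma indefinite_integral_from_square:
  fixes F f :: "real \<Rightarrow> real"
  assumes F: "indefinite_integral_from t0 f F"
  shows "indefinite_integral_from t0 (\<lambda>t. F t * f t) (\<lambda>t. (F t)\<^sup>2 / 2)"
proof -
  have main: "(\<lambda>t. F t * f t) absolutely_integrable_on {t0..T}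
      \<and> (F T)\<^sup>2 - (F t0)\<^sup>2 = 2 * integral {t0..T} (\<lambda>t. F t * f t)" if "t0 \<le> T" for T
  proof -
    have "F t = F t0 + integral {t0..t} f" if "t \<in> {t0..T}" for t
      using indefinite_integral_from_increment[OF F order_refl, of t] that by simp
    then show ?thesis
      using indefinite_integral_square[OF that indefinite_integral_from_absolutely_integrable_on[OF F order_refl]]
      by blast
  qed
  show ?thesis unfolding indefinite_integral_from_def
  proof safe
    fix T assume "t0 \<le> T"
    from main[OF this] show "(\<lambda>t. F t * f t) absolutely_integrable_on {t0..T}"
      and "(F T)\<^sup>2 / 2 = (F t0)\<^sup>2 / 2 + integral {t0..T} (\<lambda>t. F t * f t)"
      by linarith+
  qed
qed

lemma indefinite_integral_from_norm_square:
  fixes F f :: "real \<Rightarrow> 'a::euclidean_space"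
  assumes F: "indefinite_integral_from t0 f F"
  shows "indefinite_integral_from t0 (\<lambda>t. inner (F t) (f t)) (\<lambda>t. (norm (F t))\<^sup>2 / 2)"
proof -
  have "indefinite_integral_from t0 (\<lambda>t. inner (F t) b * inner (f t) b) (\<lambda>t. (inner (F t) b)\<^sup>2 / 2)"
    for b
    using indefinite_integral_from_square[OF indefinite_integral_from_linear[OF F bounded_linear_inner_left]] .
  then have "indefinite_integral_from t0 (\<lambda>t. \<Sum>b\<in>Basis. inner (F t) b * inner (f t) b)
      (\<lambda>t. \<Sum>b\<in>Basis. (inner (F t) b)\<^sup>2 / 2)"
    by (rule indefinite_integral_from_sum[OF finite_Basis])
  moreover have "(\<Sum>b\<in>Basis. (inner x b)\<^sup>2 / 2) = (norm x)\<^sup>2 / 2" for x :: 'a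
    unfolding power2_norm_eq_inner euclidean_inner[of x x] sum_divide_distrib[symmetric]
    by (simp add: power2_eq_square)
  moreover have "(\<Sum>b\<in>Basis. inner x b * inner y b) = inner x y" for x y :: 'a
    by (rule euclidean_inner[symmetric])
  ultimately show ?thesis by simp
qed

lemma indefinite_integral_from_derivative:
  assumes "\<And>t. t \<ge> t0 \<Longrightarrow> (F has_vector_derivative f t) (at t within {t0..})"
    and "continuous_on {t0..} f"
  shows "indefinite_integral_from t0 f F"
  unfolding indefinite_integral_from_def
proof safe
  fix T assume "t0 \<le> T"
  show "f absolutely_integrable_on {t0..T}"
    by (rule absolutely_integrable_continuous_real) (use assms(2) in \<open>auto elim: continuous_on_subset\<close>)
next
  fix t assume "t0 \<le> t"
  have "(f has_integral (F t - F t0)) {t0..t}"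
    by (rule fundamental_theorem_of_calculus[OF \<open>t0 \<le> t\<close>])
      (auto intro: has_vector_derivative_within_subset[OF assms(1)])
  then show "F t = F t0 + integral {t0..t} f" by (simp add: integral_unique)
qed

lemma indefinite_integral_from_increment_le:
  fixes F f g :: "real \<Rightarrow> real"
  assumes F: "indefinite_integral_from t0 f F" and "t0 \<le> a" and "a \<le> b"
    and g: "g integrable_on {a..b}" and le: "AE s in lebesgue. s \<ge> t0 \<longrightarrow> f s \<le> g s"
  shows "F b - F a \<le> integral {a..b} g"
proof -
  obtain N where N: "negligible N" and fg: "\<And>s. s \<notin> N \<Longrightarrow> s \<ge> t0 \<Longrightarrow> f s \<le> g s"
    using le unfolding eventually_ae_filter_negligible by blast
  define f' where "f' s = (if s \<in> N then g s else f s)" for s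
  have "integral {a..b} f = integral {a..b} f'"
    by (rule integral_spike[OF N]) (auto simp: f'_def)
  also have "\<dots> \<le> integral {a..b} g"
  proof (rule integral_le)
    show "f' integrable_on {a..b}"
      by (rule integrable_spike[OF indefinite_integral_from_integrable_on[OF F \<open>t0 \<le> a\<close>] N])
        (auto simp: f'_def)
  qed (use g fg \<open>t0 \<le> a\<close> in \<open>auto simp: f'_def\<close>)
  finally show ?thesis using indefinite_integral_from_increment[OF assms(1-3)] by simp
qed

section \<open>Incidence matrix of a connected graph\<close>

abbreviation edge_differences :: "('e::finite \<Rightarrow> 'n::finite) \<Rightarrow> ('e \<Rightarrow> 'n) \<Rightarrow> real^('n \<times> 'r::finite) \<Rightarrow> real^('e \<times> 'r)"
  where "edge_differences etl ehd x \<equiv> kron (transpose (incidence etl ehd)) (mat 1) *v x"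

lemma sum_UNIV_prod:
  "(\<Sum>j\<in>(UNIV::('a::finite \<times> 'b::finite) set). g j) = (\<Sum>i\<in>UNIV. \<Sum>k\<in>UNIV. g (i, k))"
  by (subst UNIV_Times_UNIV[symmetric]) (simp add: sum.cartesian_product)

lemma edge_differences_apply:
  assumes "undirected_connected etl ehd"
  shows "edge_differences etl ehd x $ (e, k) = x $ (ehd e, k) - x $ (etl e, k)"
proof -
  have "etl e \<noteq> ehd e" using assms by (simp add: undirected_connected_def)
  have "edge_differences etl ehd x $ (e, k)
      = (\<Sum>i\<in>UNIV. \<Sum>k'\<in>UNIV. (if ehd e = i then 1 else if etl e = i then -1 else 0)
            * (if k = k' then 1 else 0) * x $ (i, k'))"
    unfolding matrix_vector_mult_def kron_def transpose_def incidence_def mat_def sum_UNIV_prod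
    by (simp only: vec_lambda_beta fst_conv snd_conv)
  also have "\<dots> = (\<Sum>i\<in>UNIV. (if ehd e = i then 1 else if etl e = i then -1 else 0) * x $ (i, k))"
  proof (intro sum.cong refl)
    fix i
    have "(\<Sum>k'\<in>UNIV. (if ehd e = i then 1 else if etl e = i then -1 else 0) * (if k = k' then 1 else 0) * x $ (i, k'))
        = (\<Sum>k'\<in>UNIV. if k' = k then (if ehd e = i then 1 else if etl e = i then -1 else 0) * x $ (i, k) else 0)"
      by (rule sum.cong) auto
    then show "(\<Sum>k'\<in>UNIV. (if ehd e = i then 1 else if etl e = i then -1 else 0) * (if k = k' then 1 else 0) * x $ (i, k'))
        = (if ehd e = i then 1 else if etl e = i then -1 else 0) * x $ (i, k)"
      by simp
  qed
  also have "\<dots> = (\<Sum>i\<in>UNIV. (if i = ehd e then x $ (i, k) else 0) - (if i = etl e then x $ (i, k) else 0))"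
    using \<open>etl e \<noteq> ehd e\<close> by (intro sum.cong) auto
  also have "\<dots> = x $ (ehd e, k) - x $ (etl e, k)"
    by (simp add: sum_subtractf)
  finally show ?thesis .
qed

lemma inner_kron_mat1_mult:
  "inner x (kron B (mat 1) *v q) = inner (kron (transpose B) (mat 1) *v x) q"
proof -
  have "transpose (kron B (mat 1)) = kron (transpose B) (mat 1)"
    unfolding vec_eq_iff transpose_def kron_def mat_def by auto
  then show ?thesis
    by (metis dot_lmul_matrix transpose_matrix_vector)
qed

lemma diagm_mult_apply: "(diagm q *v s) $ j = q $ j * s $ j"
proof -
  have "(diagm q *v s) $ j = (\<Sum>i\<in>UNIV. if i = j then q $ j * s $ j else 0)"
    unfolding matrix_vector_mult_def diagm_def by (simp only: vec_lambda_beta) (rule sum.cong, auto)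
  then show ?thesis by simp
qed

(* Any two agents are joined by a path of at most |E| edges. *)
lemma potential_difference_le_edge_sum:
  fixes etl ehd :: "'e::finite \<Rightarrow> 'n::finite" and p :: "'n \<Rightarrow> real"
  assumes "undirected_connected etl ehd"
  shows "\<bar>p i - p j\<bar> \<le> real CARD('e) * (\<Sum>e\<in>UNIV. \<bar>p (ehd e) - p (etl e)\<bar>)"
proof -
  define R where "R = range (\<lambda>e. (etl e, ehd e))"
  define S where "S = (\<Sum>e\<in>UNIV. \<bar>p (ehd e) - p (etl e)\<bar>)"
  have path: "\<bar>p i - p j\<bar> \<le> real n * S" if "(i, j) \<in> R ^^ n" for n j
    using that
  proof (induction n arbitrary: j)
    case (Suc n)
    then obtain m e where "(i, m) \<in> R ^^ n" "m = etl e" "j = ehd e"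
      unfolding R_def by auto
    moreover have "\<bar>p (etl e) - p (ehd e)\<bar> \<le> S"
      unfolding S_def abs_minus_commute[of "p (etl e)"] by (rule member_le_sum) auto
    ultimately show ?case using Suc.IH by (simp add: algebra_simps) (smt (verit))
  qed simp
  have "(i, j) \<in> R\<^sup>*" using assms unfolding undirected_connected_def R_def by blast
  then obtain n where "(i, j) \<in> R ^^ n" and "n \<le> card R"
    using rtrancl_finite_eq_relpow[of R] by auto
  moreover have "card R \<le> CARD('e)" unfolding R_def by (rule card_image_le) simp
  moreover have "S \<ge> 0" unfolding S_def by (simp add: sum_nonneg)
  ultimately show ?thesis
    using path by (smt (verit) S_def mult_right_mono of_nat_mono)
qed

definition consensus_deviation :: "real^('n::finite \<times> 'r::finite) \<Rightarrow> real^('n \<times> 'r)" where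
  "consensus_deviation y = y - vkron ones (phibar y)"

lemma consensus_deviation_apply:
  fixes y :: "real^('n::finite \<times> 'r::finite)"
  shows "consensus_deviation y $ (i, k) = y $ (i, k) - (\<Sum>j\<in>UNIV. y $ (j, k)) / real CARD('n)"
  by (simp add: consensus_deviation_def vkron_def ones_def phibar_def)

lemma linear_consensus_deviation: "linear consensus_deviation"
  by (rule linearI) (simp_all add: vec_eq_iff consensus_deviation_apply sum.distrib
      add_divide_distrib sum_distrib_left[symmetric] right_diff_distrib split_paired_all)

lemma sum_consensus_deviation: "(\<Sum>i\<in>UNIV. consensus_deviation y $ (i, k)) = 0"
  by (simp add: consensus_deviation_apply sum_subtractf)

lemma edge_differences_consensus_deviation:
  assumes "undirected_connected etl ehd"
  shows "edge_differences etl ehd (consensus_deviation y) = edge_differences etl ehd y"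
  by (simp add: vec_eq_iff edge_differences_apply[OF assms]
      consensus_deviation_apply split_paired_all)

lemma abs_consensus_deviation_le:
  fixes etl ehd :: "'e::finite \<Rightarrow> 'n::finite" and y :: "real^('n \<times> 'r::finite)"
  assumes "undirected_connected etl ehd"
    and edge: "\<And>e. \<bar>y $ (ehd e, k) - y $ (etl e, k)\<bar> \<le> b"
  shows "\<bar>consensus_deviation y $ (i, k)\<bar> \<le> real CARD('e) * (real CARD('e) * b)"
proof -
  have pair: "\<bar>y $ (i, k) - y $ (j, k)\<bar> \<le> real CARD('e) * (real CARD('e) * b)" for j
  proof -
    have "\<bar>y $ (i, k) - y $ (j, k)\<bar> \<le> real CARD('e) * (\<Sum>e\<in>UNIV. \<bar>y $ (ehd e, k) - y $ (etl e, k)\<bar>)"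
      by (rule potential_difference_le_edge_sum[OF assms(1)])
    also have "\<dots> \<le> real CARD('e) * (real CARD('e) * b)"
      using sum_mono[of UNIV "\<lambda>e. \<bar>y $ (ehd e, k) - y $ (etl e, k)\<bar>" "\<lambda>_. b"] edge
      by (intro mult_left_mono) auto
    finally show ?thesis .
  qed
  have "consensus_deviation y $ (i, k) = (\<Sum>j\<in>UNIV. y $ (i, k) - y $ (j, k)) / real CARD('n)"
    by (simp add: consensus_deviation_apply sum_subtractf diff_divide_distrib)
  also have "\<bar>\<dots>\<bar> \<le> (\<Sum>j\<in>(UNIV::'n set). real CARD('e) * (real CARD('e) * b)) / real CARD('n)"
  proof -
    have "\<bar>\<Sum>j\<in>UNIV. y $ (i, k) - y $ (j, k)\<bar> \<le> (\<Sum>j\<in>(UNIV::'n set). real CARD('e) * (real CARD('e) * b))"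
      by (rule order_trans[OF sum_abs sum_mono]) (rule pair)
    then show ?thesis by (simp add: abs_divide pos_divide_le_eq mult.commute)
  qed
  finally show ?thesis by simp
qed

lemma inner_le_of_column_sums_zero:
  fixes etl ehd :: "'e::finite \<Rightarrow> 'n::finite" and x d :: "real^('n \<times> 'r::finite)"
  assumes "undirected_connected etl ehd"
    and d0: "\<And>k. (\<Sum>i\<in>UNIV. d $ (i, k)) = 0" and db: "\<And>i k. \<bar>d $ (i, k)\<bar> \<le> b"
  shows "inner x d \<le> real CARD('n) * real CARD('e) * b
           * (\<Sum>j\<in>UNIV. \<bar>edge_differences etl ehd x $ j\<bar>)"
proof -
  obtain i0 :: 'n where True by blast
  define S where "S k = (\<Sum>e\<in>UNIV. \<bar>x $ (ehd e, k) - x $ (etl e, k)\<bar>)" for k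
  have "b \<ge> 0" using db[of i0] by (meson abs_ge_zero order_trans)
  have column: "(\<Sum>i\<in>UNIV. x $ (i, k) * d $ (i, k)) \<le> real CARD('n) * real CARD('e) * b * S k" for k
  proof -
    have "(\<Sum>i\<in>UNIV. x $ (i, k) * d $ (i, k)) = (\<Sum>i\<in>UNIV. (x $ (i, k) - x $ (i0, k)) * d $ (i, k))"
      using d0[of k] by (simp add: left_diff_distrib sum_subtractf sum_distrib_left[symmetric])
    also have "\<dots> \<le> (\<Sum>i\<in>(UNIV::'n set). real CARD('e) * S k * b)"
    proof (rule sum_mono)
      fix i
      have "\<bar>x $ (i, k) - x $ (i0, k)\<bar> \<le> real CARD('e) * S k"
        unfolding S_def by (rule potential_difference_le_edge_sum[OF assms(1)])
      have "(x $ (i, k) - x $ (i0, k)) * d $ (i, k) \<le> \<bar>x $ (i, k) - x $ (i0, k)\<bar> * \<bar>d $ (i, k)\<bar>"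
        by (metis abs_ge_self abs_mult)
      also have "\<dots> \<le> real CARD('e) * S k * b"
        using \<open>\<bar>x $ (i, k) - x $ (i0, k)\<bar> \<le> real CARD('e) * S k\<close> db[of i k] by (intro mult_mono) auto
      finally show "(x $ (i, k) - x $ (i0, k)) * d $ (i, k) \<le> real CARD('e) * S k * b" .
    qed
    finally show ?thesis by (simp add: mult_ac)
  qed
  have "(\<Sum>j\<in>UNIV. \<bar>edge_differences etl ehd x $ j\<bar>) = (\<Sum>k\<in>UNIV. S k)"
  proof -
    have "(\<Sum>j\<in>UNIV. \<bar>edge_differences etl ehd x $ j\<bar>)
        = (\<Sum>e\<in>UNIV. \<Sum>k\<in>UNIV. \<bar>x $ (ehd e, k) - x $ (etl e, k)\<bar>)"
      unfolding sum_UNIV_prod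
      by (simp add: edge_differences_apply[OF assms(1)])
    then show ?thesis unfolding S_def by (simp add: sum.swap[of _ "UNIV::'e set"])
  qed
  moreover have "inner x d = (\<Sum>k\<in>UNIV. \<Sum>i\<in>UNIV. x $ (i, k) * d $ (i, k))"
    unfolding inner_vec_def sum_UNIV_prod inner_real_def by (rule sum.swap)
  ultimately show ?thesis
    using sum_mono[OF column] by (simp add: sum_distrib_left)
qed

section \<open>Filippov sets of the estimator\<close>

lemma filippov_solution_iff:
  "filippov_solution f t0 w \<longleftrightarrow>
     (\<exists>v. indefinite_integral_from t0 v w \<and> (AE t in lebesgue. t \<ge> t0 \<longrightarrow> v t \<in> filippov_set f t (w t)))"
  by (auto simp: filippov_solution_def indefinite_integral_from_def)

lemma filippov_set_inner_le:
  fixes f :: "real \<Rightarrow> 'a::euclidean_space \<Rightarrow> 'a"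
  assumes \<xi>: "\<xi> \<in> filippov_set f t x"
    and near: "\<And>\<epsilon>. \<epsilon> > 0 \<Longrightarrow> eventually (\<lambda>q. inner a (f t q) < \<beta> + \<epsilon>) (nhds x)"
  shows "inner a \<xi> \<le> \<beta>"
proof (rule field_le_epsilon)
  fix \<epsilon> :: real assume "\<epsilon> > 0"
  then obtain \<delta> where "\<delta> > 0" and \<delta>: "\<And>q. dist q x < \<delta> \<Longrightarrow> inner a (f t q) < \<beta> + \<epsilon>"
    using near[OF \<open>\<epsilon> > 0\<close>] unfolding eventually_nhds_metric by blast
  have "\<xi> \<in> closure (convex hull (f t ` (ball x \<delta> - {})))"
    using \<xi> \<open>\<delta> > 0\<close> null_sets.empty_sets unfolding filippov_set_def by blast
  also have "\<dots> \<subseteq> {y. inner a y \<le> \<beta> + \<epsilon>}"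
  proof (intro closure_minimal hull_minimal closed_halfspace_le convex_halfspace_le)
    show "f t ` (ball x \<delta> - {}) \<subseteq> {y. inner a y \<le> \<beta> + \<epsilon>}"
      using \<delta> by (force simp: dist_commute)
  qed
  finally show "inner a \<xi> \<le> \<beta> + \<epsilon>" by simp
qed

lemma filippov_set_inner_le_isCont:
  fixes f :: "real \<Rightarrow> 'a::euclidean_space \<Rightarrow> 'a"
  assumes "\<xi> \<in> filippov_set f t x" and "isCont (\<lambda>q. inner a (f t q)) x"
  shows "inner a \<xi> \<le> inner a (f t x)"
proof (rule filippov_set_inner_le[OF assms(1)])
  fix \<epsilon> :: real assume "\<epsilon> > 0"
  have "((\<lambda>q. inner a (f t q)) \<longlongrightarrow> inner a (f t x)) (nhds x)"
    using assms(2) tendsto_at_iff_tendsto_nhds[of "\<lambda>q. inner a (f t q)" x] by (simp add: isCont_def)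
  then show "eventually (\<lambda>q. inner a (f t q) < inner a (f t x) + \<epsilon>) (nhds x)"
    by (rule order_tendstoD) (use \<open>\<epsilon> > 0\<close> in simp)
qed

lemma inner_estimator_field:
  "inner (a, c) (estimator_field etl ehd \<gamma> phi t q) =
     - \<gamma> * inner a (fst q)
     - (\<Sum>j\<in>UNIV. edge_differences etl ehd a $ j * (snd q $ j * sgn (edge_differences etl ehd (fst q + phi t) $ j)))
     + (\<Sum>j\<in>UNIV. c $ j * \<bar>edge_differences etl ehd (fst q + phi t) $ j\<bar>)"
proof -
  have "inner a (kron (incidence etl ehd) (mat 1) *v (diagm (snd q) *v vsgn (edge_differences etl ehd (fst q + phi t))))
      = (\<Sum>j\<in>UNIV. edge_differences etl ehd a $ j * (snd q $ j * sgn (edge_differences etl ehd (fst q + phi t) $ j)))"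
    unfolding inner_kron_mat1_mult by (simp add: inner_vec_def diagm_mult_apply vsgn_def)
  moreover have "inner c (vabs (edge_differences etl ehd (fst q + phi t)))
      = (\<Sum>j\<in>UNIV. c $ j * \<bar>edge_differences etl ehd (fst q + phi t) $ j\<bar>)"
    by (simp add: inner_vec_def vabs_def)
  ultimately show ?thesis
    by (simp add: estimator_field_def Let_def inner_add_right inner_diff_right inner_minus_right)
qed

(* The sign of the j-th edge difference jumps only where it vanishes, and there the weight
   edge_differences a $ j vanishes as well. *)
lemma isCont_inner_estimator_field:
  fixes etl ehd :: "'e::finite \<Rightarrow> 'n::finite" and q0 :: "(real^('n \<times> 'r::finite)) \<times> (real^('e \<times> 'r))"
  assumes "edge_differences etl ehd a = edge_differences etl ehd (fst q0 + phi t)"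
  shows "isCont (\<lambda>q. inner (a, c) (estimator_field etl ehd \<gamma> phi t q)) q0"
proof -
  define y where "y q = edge_differences etl ehd (fst q + phi t)" for q :: "(real^('n \<times> 'r)) \<times> (real^('e \<times> 'r))"
  have "isCont y q0"
    unfolding y_def by (intro bounded_linear.continuous[OF matrix_vector_mul_bounded_linear] continuous_intros)
  then have y: "isCont (\<lambda>q. y q $ j) q0" for j
    by (intro continuous_intros)
  have sgn_term: "isCont (\<lambda>q. edge_differences etl ehd a $ j * (snd q $ j * sgn (y q $ j))) q0" for j
  proof (cases "edge_differences etl ehd a $ j = 0")
    case False
    then have "y q0 $ j \<noteq> 0" using assms by (simp add: y_def)
    then show ?thesis unfolding isCont_def
      by (intro tendsto_intros y[unfolded isCont_def]) auto
  qed simp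
  show ?thesis
    unfolding inner_estimator_field y_def[symmetric]
    by (intro sgn_term continuous_add continuous_diff continuous_sum continuous_intros y)
qed

section \<open>Lyapunov analysis\<close>

locale estimator_solution =
  fixes etl ehd :: "'e::finite \<Rightarrow> 'n::finite"
    and phi phi' :: "real \<Rightarrow> real^('n \<times> 'r::finite)"
    and \<gamma> t0 \<phi>b \<phi>db :: real
    and w v :: "real \<Rightarrow> (real^('n \<times> 'r)) \<times> (real^('e \<times> 'r))"
  assumes connected: "undirected_connected etl ehd"
    and phi_derivative: "\<forall>t\<ge>0. (phi has_vector_derivative phi' t) (at t within {0..})"
    and phi'_continuous: "continuous_on {0..} phi'"
    and phi_bound: "\<forall>t\<ge>0. infnorm (edge_differences etl ehd (phi t)) \<le> \<phi>b"
    and phi'_bound: "\<forall>t\<ge>0. infnorm (edge_differences etl ehd (phi' t)) \<le> \<phi>db"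
    and gamma_pos: "\<gamma> > 0"
    and t0_nonneg: "t0 \<ge> 0"
    and w_integral: "indefinite_integral_from t0 v w"
    and v_filippov: "AE t in lebesgue. t \<ge> t0 \<longrightarrow> v t \<in> filippov_set (estimator_field etl ehd \<gamma> phi) t (w t)"
begin

definition error :: "real \<Rightarrow> real^('n \<times> 'r)" where
  "error t = fst (w t) + consensus_deviation (phi t)"

definition error_rate :: "real \<Rightarrow> real^('n \<times> 'r)" where
  "error_rate t = fst (v t) + consensus_deviation (phi' t)"

(* K = n |E| times the bound |E|^2 (gamma phi_b + phi_db) on the entries of the forcing term
   gamma consensus_deviation (phi t) + consensus_deviation (phi' t), see cross_term_le. *)
definition gain_bound :: real where
  "gain_bound = real CARD('n) * real CARD('e) * (real CARD('e) * real CARD('e) * (\<gamma> * \<phi>b + \<phi>db))"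

definition gain_error :: "real \<Rightarrow> real^('e \<times> 'r)" where
  "gain_error t = snd (w t) - (\<chi> _. gain_bound)"

definition energy :: "real \<Rightarrow> real" where
  "energy t = (norm (error t))\<^sup>2 / 2 + (norm (gain_error t))\<^sup>2 / 2"

lemma error_eq: "error t = fst (w t) + phi t - vkron ones (phibar (phi t))"
  by (simp add: error_def consensus_deviation_def)

lemma edge_differences_error:
  "edge_differences etl ehd (error t) = edge_differences etl ehd (fst (w t) + phi t)"
  using edge_differences_consensus_deviation[OF connected]
  by (simp add: error_def matrix_vector_right_distrib)

lemma indefinite_integral_error: "indefinite_integral_from t0 error_rate error"
proof -
  have "indefinite_integral_from t0 phi' phi"
  proof (rule indefinite_integral_from_derivative)
    show "(phi has_vector_derivative phi' t) (at t within {t0..})" if "t \<ge> t0" for t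
      by (rule has_vector_derivative_within_subset[of _ _ _ "{0..}"])
        (use that t0_nonneg phi_derivative in auto)
    show "continuous_on {t0..} phi'"
      using phi'_continuous t0_nonneg by (auto elim: continuous_on_subset)
  qed
  then have "indefinite_integral_from t0 (\<lambda>t. consensus_deviation (phi' t)) (\<lambda>t. consensus_deviation (phi t))"
    using indefinite_integral_from_linear linear_consensus_deviation linear_conv_bounded_linear by blast
  then show ?thesis
    unfolding error_def[abs_def] error_rate_def[abs_def]
    by (intro indefinite_integral_from_add indefinite_integral_from_linear[OF w_integral bounded_linear_fst])
qed

lemma indefinite_integral_gain_error: "indefinite_integral_from t0 (\<lambda>t. snd (v t)) gain_error"
  unfolding gain_error_def[abs_def]
  by (intro indefinite_integral_from_diff_const indefinite_integral_from_linear[OF w_integral bounded_linear_snd])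

lemma indefinite_integral_energy:
  "indefinite_integral_from t0 (\<lambda>t. inner (error t) (error_rate t) + inner (gain_error t) (snd (v t))) energy"
  unfolding energy_def[abs_def]
  by (intro indefinite_integral_from_add indefinite_integral_from_norm_square
      indefinite_integral_error indefinite_integral_gain_error)

lemma gain_rate_nonneg:
  assumes "v s \<in> filippov_set (estimator_field etl ehd \<gamma> phi) s (w s)"
  shows "snd (v s) $ j \<ge> 0"
proof -
  have coordinate: "inner (0, - axis j 1) p = - snd p $ j" for p :: "(real^('n \<times> 'r)) \<times> (real^('e \<times> 'r))"
    by (cases p) (simp add: inner_axis')
  have "inner (0, - axis j 1) (v s) \<le> 0"
  proof (rule filippov_set_inner_le[OF assms])
    fix \<epsilon> :: real assume "\<epsilon> > 0"
    have "snd (estimator_field etl ehd \<gamma> phi s q) $ j \<ge> 0" for q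
      by (simp add: estimator_field_def Let_def vabs_def)
    then show "eventually (\<lambda>q. inner (0, - axis j 1) (estimator_field etl ehd \<gamma> phi s q) < 0 + \<epsilon>) (nhds (w s))"
      unfolding coordinate using \<open>\<epsilon> > 0\<close> by (intro always_eventually allI) (smt (verit))
  qed
  then show ?thesis unfolding coordinate by simp
qed

lemma filippov_rate_estimate:
  assumes "v s \<in> filippov_set (estimator_field etl ehd \<gamma> phi) s (w s)"
  shows "inner (error s, gain_error s) (v s)
    \<le> - \<gamma> * inner (error s) (fst (w s)) - gain_bound * (\<Sum>j\<in>UNIV. \<bar>edge_differences etl ehd (error s) $ j\<bar>)"
proof -
  define y where "y = edge_differences etl ehd (error s)"
  have y: "y = edge_differences etl ehd (fst (w s) + phi s)"
    unfolding y_def by (rule edge_differences_error)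
  have "inner (error s, gain_error s) (v s) \<le> inner (error s, gain_error s) (estimator_field etl ehd \<gamma> phi s (w s))"
    by (intro filippov_set_inner_le_isCont[OF assms] isCont_inner_estimator_field edge_differences_error)
  also have "\<dots> = - \<gamma> * inner (error s) (fst (w s))
      - (\<Sum>j\<in>UNIV. y $ j * (snd (w s) $ j * sgn (y $ j))) + (\<Sum>j\<in>UNIV. gain_error s $ j * \<bar>y $ j\<bar>)"
    unfolding inner_estimator_field y_def[symmetric] y[symmetric] ..
  also have "\<dots> = - \<gamma> * inner (error s) (fst (w s)) - gain_bound * (\<Sum>j\<in>UNIV. \<bar>y $ j\<bar>)"
  proof -
    have "y $ j * (snd (w s) $ j * sgn (y $ j)) = snd (w s) $ j * \<bar>y $ j\<bar>" for j
      by (simp add: sgn_if)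
    then have "(\<Sum>j\<in>UNIV. y $ j * (snd (w s) $ j * sgn (y $ j))) = (\<Sum>j\<in>UNIV. snd (w s) $ j * \<bar>y $ j\<bar>)"
      by (rule sum.cong[OF refl])
    then show ?thesis
      by (simp add: gain_error_def sum_distrib_left sum_subtractf left_diff_distrib)
  qed
  finally show ?thesis unfolding y_def .
qed

lemma cross_term_le:
  assumes "s \<ge> t0"
  shows "inner (error s) (\<gamma> *\<^sub>R consensus_deviation (phi s) + consensus_deviation (phi' s))
    \<le> gain_bound * (\<Sum>j\<in>UNIV. \<bar>edge_differences etl ehd (error s) $ j\<bar>)"
proof -
  define E where "E = real CARD('e)"
  have edge: "\<bar>p $ (ehd e, k) - p $ (etl e, k)\<bar> \<le> b"
    if "infnorm (edge_differences etl ehd p) \<le> b" for p :: "real^('n \<times> 'r)" and b e k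
    using component_le_infnorm_cart[of "edge_differences etl ehd p" "(e, k)"] that
    by (simp add: edge_differences_apply[OF connected])
  have "s \<ge> 0" using assms t0_nonneg by simp
  have bound: "\<bar>(\<gamma> *\<^sub>R consensus_deviation (phi s) + consensus_deviation (phi' s)) $ (i, k)\<bar>
      \<le> \<gamma> * (E * (E * \<phi>b)) + E * (E * \<phi>db)" for i k
  proof -
    have "\<bar>consensus_deviation (phi s) $ (i, k)\<bar> \<le> E * (E * \<phi>b)"
      unfolding E_def using edge phi_bound \<open>s \<ge> 0\<close> by (intro abs_consensus_deviation_le[OF connected]) blast
    moreover have "\<bar>consensus_deviation (phi' s) $ (i, k)\<bar> \<le> E * (E * \<phi>db)"
      unfolding E_def using edge phi'_bound \<open>s \<ge> 0\<close> by (intro abs_consensus_deviation_le[OF connected]) blast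
    moreover have "\<bar>(\<gamma> *\<^sub>R consensus_deviation (phi s) + consensus_deviation (phi' s)) $ (i, k)\<bar>
        \<le> \<gamma> * \<bar>consensus_deviation (phi s) $ (i, k)\<bar> + \<bar>consensus_deviation (phi' s) $ (i, k)\<bar>"
      using gamma_pos abs_triangle_ineq[of "\<gamma> * consensus_deviation (phi s) $ (i, k)"] by (simp add: abs_mult)
    ultimately show ?thesis
      using gamma_pos by (smt (verit) mult_left_mono)
  qed
  have sums: "(\<Sum>i\<in>UNIV. (\<gamma> *\<^sub>R consensus_deviation (phi s) + consensus_deviation (phi' s)) $ (i, k)) = 0" for k
    by (simp add: sum.distrib sum_distrib_left[symmetric] sum_consensus_deviation)
  have "inner (error s) (\<gamma> *\<^sub>R consensus_deviation (phi s) + consensus_deviation (phi' s))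
    \<le> real CARD('n) * E * (\<gamma> * (E * (E * \<phi>b)) + E * (E * \<phi>db))
        * (\<Sum>j\<in>UNIV. \<bar>edge_differences etl ehd (error s) $ j\<bar>)"
    unfolding E_def by (rule inner_le_of_column_sums_zero[OF connected sums bound[unfolded E_def]])
  also have "\<dots> = gain_bound * (\<Sum>j\<in>UNIV. \<bar>edge_differences etl ehd (error s) $ j\<bar>)"
    by (simp add: gain_bound_def E_def algebra_simps)
  finally show ?thesis .
qed

lemma energy_rate_le:
  assumes "s \<ge> t0" and "v s \<in> filippov_set (estimator_field etl ehd \<gamma> phi) s (w s)"
  shows "inner (error s) (error_rate s) + inner (gain_error s) (snd (v s)) \<le> - \<gamma> * (norm (error s))\<^sup>2"
proof -
  have z: "fst (w s) = error s - consensus_deviation (phi s)" by (simp add: error_def)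
  have "- \<gamma> * inner (error s) (fst (w s))
      = - \<gamma> * (norm (error s))\<^sup>2 + inner (error s) (\<gamma> *\<^sub>R consensus_deviation (phi s))"
    unfolding z by (simp add: inner_diff_right power2_norm_eq_inner algebra_simps)
  moreover have "inner (error s) (error_rate s) + inner (gain_error s) (snd (v s))
      = inner (error s, gain_error s) (v s) + inner (error s) (consensus_deviation (phi' s))"
    by (cases "v s") (simp add: error_rate_def inner_add_right)
  ultimately show ?thesis
    using filippov_rate_estimate[OF assms(2)] cross_term_le[OF assms(1)]
    by (simp add: inner_add_right)
qed

lemma continuous_on_norm_error: "t0 \<le> a \<Longrightarrow> continuous_on {a..b} (\<lambda>t. (norm (error t))\<^sup>2)"
  by (intro continuous_intros indefinite_integral_from_continuous_on[OF indefinite_integral_error])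

lemma energy_decrease:
  assumes "t0 \<le> a" and "a \<le> b"
  shows "energy b + \<gamma> * integral {a..b} (\<lambda>t. (norm (error t))\<^sup>2) \<le> energy a"
proof -
  have "energy b - energy a \<le> integral {a..b} (\<lambda>t. - \<gamma> * (norm (error t))\<^sup>2)"
  proof (rule indefinite_integral_from_increment_le[OF indefinite_integral_energy assms])
    show "(\<lambda>t. - \<gamma> * (norm (error t))\<^sup>2) integrable_on {a..b}"
      by (intro integrable_continuous_real continuous_intros continuous_on_norm_error assms(1))
    show "AE s in lebesgue. s \<ge> t0 \<longrightarrow>
        inner (error s) (error_rate s) + inner (gain_error s) (snd (v s)) \<le> - \<gamma> * (norm (error s))\<^sup>2"
      using v_filippov by eventually_elim (blast intro: energy_rate_le)
  qed
  then show ?thesis by simp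
qed

lemma energy_nonneg: "energy t \<ge> 0"
  by (simp add: energy_def)

lemma energy_antimono:
  assumes "t0 \<le> a" and "a \<le> b"
  shows "energy b \<le> energy a"
proof -
  have "integral {a..b} (\<lambda>t. (norm (error t))\<^sup>2) \<ge> 0"
    by (intro integral_nonneg integrable_continuous_real continuous_on_norm_error assms(1)) simp
  then show ?thesis using energy_decrease[OF assms] gamma_pos by (smt (verit) mult_nonneg_nonneg)
qed

lemma gain_error_mono:
  assumes "t0 \<le> a" and "a \<le> b"
  shows "gain_error a $ j \<le> gain_error b $ j"
proof -
  have "indefinite_integral_from t0 (\<lambda>t. - snd (v t) $ j) (\<lambda>t. - gain_error t $ j)"
    by (rule indefinite_integral_from_linear[OF indefinite_integral_gain_error
          bounded_linear_minus[OF bounded_linear_vec_nth]])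
  then have "- gain_error b $ j - - gain_error a $ j \<le> integral {a..b} (\<lambda>_. 0)"
  proof (rule indefinite_integral_from_increment_le[OF _ assms])
    show "AE s in lebesgue. s \<ge> t0 \<longrightarrow> - snd (v s) $ j \<le> 0"
      using v_filippov by eventually_elim (simp add: gain_rate_nonneg)
  qed (rule integrable_0)
  then show ?thesis by simp
qed

lemma gain_error_le:
  assumes "t0 \<le> t"
  shows "gain_error t $ j \<le> 1 + 2 * energy t0"
proof -
  have "(gain_error t $ j)\<^sup>2 \<le> (norm (gain_error t))\<^sup>2"
    using power_mono[OF component_le_norm_cart[of "gain_error t" j] abs_ge_zero, of 2] by simp
  also have "\<dots> \<le> 2 * energy t" by (simp add: energy_def)
  also have "\<dots> \<le> 2 * energy t0" using energy_antimono[OF order_refl assms] by simp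
  finally have "(gain_error t $ j)\<^sup>2 \<le> 2 * energy t0" .
  moreover have "gain_error t $ j \<le> 1 + (gain_error t $ j)\<^sup>2"
    using zero_le_power2[of "gain_error t $ j - 1"] unfolding power2_diff
    by (simp add: power2_eq_square) (use zero_le_square[of "gain_error t $ j"] in linarith)
  ultimately show ?thesis by linarith
qed

lemma gain_error_convergent: "\<exists>L. (gain_error \<longlongrightarrow> L) at_top"
proof -
  have "\<exists>L. ((\<lambda>t. gain_error t $ j) \<longlongrightarrow> L) at_top" for j
    by (rule bounded_mono_tendsto_at_top[OF gain_error_mono gain_error_le])
  then obtain L where "\<And>j. ((\<lambda>t. gain_error t $ j) \<longlongrightarrow> L j) at_top" by metis
  then have "(gain_error \<longlongrightarrow> (\<chi> j. L j)) at_top" by (intro vec_tendstoI) simp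
  then show ?thesis by blast
qed

lemma energy_convergent: "\<exists>L. (energy \<longlongrightarrow> L) at_top"
proof -
  obtain L where "((\<lambda>t. - energy t) \<longlongrightarrow> L) at_top"
    using bounded_mono_tendsto_at_top[of t0 "\<lambda>t. - energy t" 0] energy_antimono energy_nonneg
    by fastforce
  then have "(energy \<longlongrightarrow> - L) at_top" using tendsto_minus by fastforce
  then show ?thesis by blast
qed

lemma error_tendsto_zero: "(error \<longlongrightarrow> 0) at_top"
proof -
  obtain LE LG where LE: "(energy \<longlongrightarrow> LE) at_top" and LG: "(gain_error \<longlongrightarrow> LG) at_top"
    using energy_convergent gain_error_convergent by blast
  have "((\<lambda>t. 2 * energy t - (norm (gain_error t))\<^sup>2) \<longlongrightarrow> 2 * LE - (norm LG)\<^sup>2) at_top"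
    by (intro tendsto_intros LE LG)
  then have P: "((\<lambda>t. (norm (error t))\<^sup>2) \<longlongrightarrow> 2 * LE - (norm LG)\<^sup>2) at_top"
    by (simp add: energy_def)
  have "2 * LE - (norm LG)\<^sup>2 = 0"
  proof (rule limit_zero_of_bounded_integrals[OF P])
    show "(\<lambda>t. (norm (error t))\<^sup>2) integrable_on {a..b}" if "t0 \<le> a" for a b
      by (intro integrable_continuous_real continuous_on_norm_error that)
    show "integral {a..b} (\<lambda>t. (norm (error t))\<^sup>2) \<le> energy t0 / \<gamma>" if "t0 \<le> a" "a \<le> b" for a b
      using energy_decrease[OF that] energy_nonneg[of b] energy_antimono[OF order_refl that(1)] gamma_pos
      by (simp add: le_divide_eq mult.commute)
  qed simp
  then have "((\<lambda>t. norm (error t)) \<longlongrightarrow> 0) at_top"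
    using tendsto_real_sqrt[OF P] by simp
  then show ?thesis by (rule tendsto_norm_zero_cancel)
qed

end

theorem theorem1:
  fixes etl ehd :: "'e::finite \<Rightarrow> 'n::finite"
    and phi phi' :: "real \<Rightarrow> real^('n \<times> 'r::finite)"
    and \<gamma> t0 \<phi>b \<phi>db :: real
    and z0 :: "real^('n \<times> 'r)"
    and w :: "real \<Rightarrow> (real^('n \<times> 'r)) \<times> (real^('e \<times> 'r))"
  assumes A1: "undirected_connected etl ehd"
    and A2_diff: "\<forall>t\<ge>0. (phi has_vector_derivative phi' t) (at t within {0..})"
    and A2_cont: "continuous_on {0..} phi'"
    and A2_bnd: "\<forall>t\<ge>0. infnorm (kron (transpose (incidence etl ehd)) (mat 1) *v phi t) \<le> \<phi>b"
    and A2_dbnd: "\<forall>t\<ge>0. infnorm (kron (transpose (incidence etl ehd)) (mat 1) *v phi' t) \<le> \<phi>db"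
    and gamma_pos: "\<gamma> > 0"
    and t0_nonneg: "t0 \<ge> 0"
    and sol: "filippov_solution (estimator_field etl ehd \<gamma> phi) t0 w"
    and init_z: "fst (w t0) = z0"
    and init_kappa: "\<forall>j. snd (w t0) $ j \<ge> 1"
  shows "((\<lambda>t. fst (w t) + phi t - vkron ones (phibar (phi t))) \<longlongrightarrow> 0) at_top"
proof -
  (* Neither the initial gains nor z0 matter: the gains are nondecreasing from any start. *)
  obtain v where "indefinite_integral_from t0 v w"
    and "AE t in lebesgue. t \<ge> t0 \<longrightarrow> v t \<in> filippov_set (estimator_field etl ehd \<gamma> phi) t (w t)"
    using sol unfolding filippov_solution_iff by blast
  then interpret estimator_solution etl ehd phi phi' \<gamma> t0 \<phi>b \<phi>db w v
    using assms by unfold_locales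
  show ?thesis
    using error_tendsto_zero by (simp add: error_eq[abs_def])
qed

end
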